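(* Let $\Omega\subset\mathbb{R}^n$ be an open bounded domain with $\partial\Omega\in C^{2+\beta}$, $\beta>0$, let $r,a_1,P,K$ be continuous and positive on $\overline\Omega$ with $a_1,P\in C^2(\Omega)$. Suppose $u^*$ is a positive solution of $$\nabla\cdot\left[a_1(x)\nabla\left(\frac{u^*}{P}\right)\right]+r(x)u^*\left(1-\frac{u^*}{K}\right)=0,\ x\in\Omega,\qquad \frac{\partial(u^*/P)}{\partial n}=0,\ x\in\partial\Omega,$$ and that $\nabla\cdot[a_1(x)\nabla(K(x)/P(x))]\not\equiv 0$ on $\Omega$. Then $\int_\Omega r(x)K(x)\,dx>\int_\Omega r(x)u^*(x)\,dx$. *)

theory Defs
  imports "HOL-Analysis.Analysis"
begin

definition grad :: "('a::euclidean_space \<Rightarrow> real) \<Rightarrow> 'a \<Rightarrow> 'a" where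
  "grad f x = (\<Sum>i\<in>Basis. frechet_derivative f (at x) i *\<^sub>R i)"

definition divg :: "('a::euclidean_space \<Rightarrow> 'a) \<Rightarrow> 'a \<Rightarrow> real" where
  "divg F x = (\<Sum>i\<in>Basis. frechet_derivative F (at x) i \<bullet> i)"

definition C2_with :: "('a::euclidean_space \<Rightarrow> real) \<Rightarrow> 'a set \<Rightarrow> ('a \<Rightarrow> 'a) \<Rightarrow> ('a \<Rightarrow> 'a \<Rightarrow> 'a) \<Rightarrow> bool" where
  "C2_with f S g H \<longleftrightarrow>
     (\<forall>x\<in>S. (f has_derivative (\<lambda>h. g x \<bullet> h)) (at x)) \<and>
     (\<forall>x\<in>S. (g has_derivative H x) (at x)) \<and>
     (\<forall>i\<in>Basis. \<forall>j\<in>Basis. continuous_on S (\<lambda>x. H x i \<bullet> j))"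

definition C2_on :: "('a::euclidean_space \<Rightarrow> real) \<Rightarrow> 'a set \<Rightarrow> bool" where
  "C2_on f S \<longleftrightarrow> (\<exists>g H. C2_with f S g H)"

text \<open>rho is a global C^{2+beta} defining function for the bounded domain Omega:
  Omega = {rho < 0}, boundary = {rho = 0}, nonvanishing gradient on the boundary,
  and beta-Hoelder continuous second derivatives on the closure of Omega.\<close>
definition C2beta_defining_fun :: "'a::euclidean_space set \<Rightarrow> real \<Rightarrow> ('a \<Rightarrow> real) \<Rightarrow> bool" where
  "C2beta_defining_fun \<Omega> \<beta> \<rho> \<longleftrightarrow>
     (\<exists>g H. C2_with \<rho> UNIV g H \<and>
        (\<exists>C. \<forall>x\<in>closure \<Omega>. \<forall>y\<in>closure \<Omega>. \<forall>i\<in>Basis. \<forall>j\<in>Basis.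
              \<bar>H x i \<bullet> j - H y i \<bullet> j\<bar> \<le> C * dist x y powr \<beta>)) \<and>
     \<Omega> = {x. \<rho> x < 0} \<and> frontier \<Omega> = {x. \<rho> x = 0} \<and>
     (\<forall>x\<in>frontier \<Omega>. grad \<rho> x \<noteq> 0)"

definition boundary_C2beta :: "'a::euclidean_space set \<Rightarrow> real \<Rightarrow> bool" where
  "boundary_C2beta \<Omega> \<beta> \<longleftrightarrow> (\<exists>\<rho>. C2beta_defining_fun \<Omega> \<beta> \<rho>)"

definition outward_normal :: "('a::euclidean_space \<Rightarrow> real) \<Rightarrow> 'a \<Rightarrow> 'a" where
  "outward_normal \<rho> x = grad \<rho> x /\<^sub>R norm (grad \<rho> x)"

end

theory Submission
  imports Defs
begin

text \<open>
  Put \<open>w = u/P\<close> and \<open>F = a\<^sub>1 \<nabla>w\<close>. The equation says \<open>div F = - r u (1 - u/K)\<close> in \<open>\<Omega>\<close>, and the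
  Neumann condition says that \<open>F\<close> is tangential on \<open>\<partial>\<Omega>\<close>, so the divergence theorem gives
  \<open>\<integral> r u (1 - u/K) = 0\<close>. Since \<open>r K - r u = r (K - u)\<^sup>2/K - r u (1 - u/K)\<close>, the difference of the
  two integrals is \<open>\<integral> r (K - u)\<^sup>2/K\<close>, which is positive because \<open>u \<noteq> K\<close> somewhere: \<open>u = K\<close> would
  turn the equation into \<open>div (a\<^sub>1 \<nabla>(K/P)) = 0\<close>.

  The divergence theorem is proved with cut-offs \<open>\<phi>\<^sub>\<epsilon> = \<chi>(\<rho>/\<epsilon>)\<close> built from the defining function
  \<open>\<rho>\<close> of \<open>\<Omega>\<close>. The field \<open>\<phi>\<^sub>\<epsilon> F\<close> has compact support in \<open>\<Omega>\<close>, so its divergence integrates to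
  \<open>0\<close>; hence \<open>\<integral> \<phi>\<^sub>\<epsilon> div F\<close> equals an integral of \<open>\<nabla>\<rho> \<bullet> F\<close> against weights \<open>|\<chi>'(\<rho>/\<epsilon>)|/\<epsilon>\<close>
  living in the layer \<open>-2\<epsilon> < \<rho> < -\<epsilon>\<close>. For \<open>F = \<nabla>\<rho>\<close> this shows that the weights have bounded mass,
  as \<open>|\<nabla>\<rho>|\<close> is bounded below near \<open>\<partial>\<Omega>\<close>; for tangential \<open>F\<close> the normal component \<open>\<nabla>\<rho> \<bullet> F\<close>
  tends to \<open>0\<close> at \<open>\<partial>\<Omega>\<close>, so the layer integrals tend to \<open>0\<close>, while \<open>\<integral> \<phi>\<^sub>\<epsilon> div F \<rightarrow> \<integral> div F\<close>.
\<close>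

section \<open>A \<open>C\<^sup>1\<close> step function\<close>

lemma has_real_derivative_glue:
  fixes f g h :: "real \<Rightarrow> real"
  assumes g: "(g has_real_derivative D) (at a)" and h: "(h has_real_derivative D) (at a)"
    and fa: "f a = g a" "f a = h a"
    and left: "\<And>s. a - 1 < s \<Longrightarrow> s < a \<Longrightarrow> f s = g s"
    and right: "\<And>s. a < s \<Longrightarrow> s < a + 1 \<Longrightarrow> f s = h s"
  shows "(f has_real_derivative D) (at a)"
  unfolding has_field_derivative_iff
proof (rule filterlim_split_at)
  have "((\<lambda>y. (g y - g a) / (y - a)) \<longlongrightarrow> D) (at_left a)"
    using g unfolding has_field_derivative_iff by (rule filterlim_mono) (auto simp: at_le)
  then show "((\<lambda>y. (f y - f a) / (y - a)) \<longlongrightarrow> D) (at_left a)"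
    by (rule Lim_transform_eventually)
       (auto simp: fa(1) left intro!: eventually_mono[OF eventually_at_left_real[of "a - 1" a]])
next
  have "((\<lambda>y. (h y - h a) / (y - a)) \<longlongrightarrow> D) (at_right a)"
    using h unfolding has_field_derivative_iff by (rule filterlim_mono) (auto simp: at_le)
  then show "((\<lambda>y. (f y - f a) / (y - a)) \<longlongrightarrow> D) (at_right a)"
    by (rule Lim_transform_eventually)
       (auto simp: fa(2) right intro!: eventually_mono[OF eventually_at_right_real[of a "a + 1"]])
qed

definition smooth_step :: "real \<Rightarrow> real" where
  "smooth_step s = (if s \<le> -2 then 1 else if s \<ge> -1 then 0 else 1 - 3*(s+2)^2 + 2*(s+2)^3)"

definition smooth_step' :: "real \<Rightarrow> real" where
  "smooth_step' s = (if s \<le> -2 then 0 else if s \<ge> -1 then 0 else 6*(s+2)*(s+1))"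

lemma has_real_derivative_smooth_step: "(smooth_step has_real_derivative smooth_step' s) (at s)"
proof -
  have cubic: "((\<lambda>s::real. 1 - 3*(s+2)^2 + 2*(s+2)^3) has_real_derivative 6*(s+2)*(s+1)) (at s)" for s
    by (auto intro!: derivative_eq_intros simp: algebra_simps power2_eq_square)
  consider "s < -2" | "s = -2" | "-2 < s" "s < -1" | "s = -1" | "s > -1" by linarith
  then show ?thesis
  proof cases
    case 1
    show ?thesis
      by (rule has_field_derivative_transform_within_open[where f="\<lambda>_. 1" and S="{..<-2}"])
         (use 1 in \<open>auto simp: smooth_step_def smooth_step'_def\<close>)
  next
    case 2
    show ?thesis
      by (rule has_real_derivative_glue[where g="\<lambda>_. 1" and h="\<lambda>s. 1 - 3*(s+2)^2 + 2*(s+2)^3"])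
         (use 2 cubic[of s] in \<open>auto simp: smooth_step_def smooth_step'_def\<close>)
  next
    case 3
    then have "smooth_step' s = 6*(s+2)*(s+1)" by (simp add: smooth_step'_def)
    moreover have "(smooth_step has_real_derivative 6*(s+2)*(s+1)) (at s)"
      by (rule has_field_derivative_transform_within_open[OF cubic, where S="{-2<..<-1}"])
         (use 3 in \<open>auto simp: smooth_step_def\<close>)
    ultimately show ?thesis by simp
  next
    case 4
    show ?thesis
      by (rule has_real_derivative_glue[where h="\<lambda>_. 0" and g="\<lambda>s. 1 - 3*(s+2)^2 + 2*(s+2)^3"])
         (use 4 cubic[of s] in \<open>auto simp: smooth_step_def smooth_step'_def\<close>)
  next
    case 5
    show ?thesis
      by (rule has_field_derivative_transform_within_open[where f="\<lambda>_. 0" and S="{-1<..}"])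
         (use 5 in \<open>auto simp: smooth_step_def smooth_step'_def\<close>)
  qed
qed

lemma continuous_on_smooth_step': "continuous_on UNIV smooth_step'"
proof -
  have left: "continuous_on UNIV (\<lambda>s::real. if s \<le> -1 then 6*(s+2)*(s+1) else 0)"
    by (rule continuous_on_cases_le[where h="\<lambda>s. s"]) (auto intro!: continuous_intros)
  have eq: "smooth_step' = (\<lambda>s. if s \<le> -2 then 0 else if s \<le> -1 then 6*(s+2)*(s+1) else 0)"
    by (auto simp: smooth_step'_def fun_eq_iff)
  show ?thesis unfolding eq
    by (rule continuous_on_cases_le[where h="\<lambda>s. s"])
       (auto intro!: continuous_intros continuous_on_subset[OF left])
qed

lemma continuous_on_smooth_step: "continuous_on UNIV smooth_step"
  using has_real_derivative_smooth_step
  by (intro continuous_at_imp_continuous_on ballI DERIV_isCont) blast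

lemma smooth_step_nonneg: "0 \<le> smooth_step s"
  and smooth_step_le_one: "smooth_step s \<le> 1"
proof -
  have "0 \<le> 1 - 3*t^2 + 2*t^3 \<and> 1 - 3*t^2 + 2*t^3 \<le> 1" if "0 \<le> t" "t \<le> 1" for t :: real
  proof -
    have "1 - 3*t^2 + 2*t^3 = (1-t)^2 * (1 + 2*t)" "1 - 3*t^2 + 2*t^3 = 1 - t^2 * (3 - 2*t)"
      by (simp_all add: algebra_simps power2_eq_square power3_eq_cube)
    moreover have "0 \<le> t^2 * (3 - 2*t)" "0 \<le> (1-t)^2 * (1 + 2*t)" using that by simp_all
    ultimately show ?thesis by linarith
  qed
  from this[of "s + 2"] show "0 \<le> smooth_step s" "smooth_step s \<le> 1"
    by (auto simp: smooth_step_def)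
qed

lemma smooth_step'_nonpos: "smooth_step' s \<le> 0"
  by (auto simp: smooth_step'_def mult_nonneg_nonpos2 intro!: mult_nonneg_nonpos)

lemma smooth_step'_nonzeroD: "smooth_step' s \<noteq> 0 \<Longrightarrow> -2 < s \<and> s < -1"
  by (auto simp: smooth_step'_def split: if_splits)

lemma smooth_step_eq_0: "-1 \<le> s \<Longrightarrow> smooth_step s = 0"
  and smooth_step_eq_1: "s \<le> -2 \<Longrightarrow> smooth_step s = 1"
  by (auto simp: smooth_step_def)

section \<open>Continuously differentiable scalar functions and vector fields\<close>

definition C1_with_grad :: "('a::euclidean_space \<Rightarrow> real) \<Rightarrow> 'a set \<Rightarrow> ('a \<Rightarrow> 'a) \<Rightarrow> bool" where
  "C1_with_grad f S g \<longleftrightarrow> (\<forall>x\<in>S. (f has_derivative (\<lambda>h. g x \<bullet> h)) (at x)) \<and> continuous_on S g"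

definition C1_with_deriv :: "('a::euclidean_space \<Rightarrow> 'a) \<Rightarrow> 'a set \<Rightarrow> ('a \<Rightarrow> 'a \<Rightarrow> 'a) \<Rightarrow> bool" where
  "C1_with_deriv V S D \<longleftrightarrow>
     (\<forall>x\<in>S. (V has_derivative D x) (at x)) \<and> (\<forall>i\<in>Basis. continuous_on S (\<lambda>x. D x i))"

lemma C1_with_grad_continuous_on: "C1_with_grad f S g \<Longrightarrow> continuous_on S f"
  unfolding C1_with_grad_def by (auto intro!: continuous_at_imp_continuous_on has_derivative_continuous)

lemma C1_with_deriv_continuous_on: "C1_with_deriv V S D \<Longrightarrow> continuous_on S V"
  unfolding C1_with_deriv_def by (auto intro!: continuous_at_imp_continuous_on has_derivative_continuous)

lemma C1_with_grad_subset: "C1_with_grad f S g \<Longrightarrow> T \<subseteq> S \<Longrightarrow> C1_with_grad f T g"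
  unfolding C1_with_grad_def by (auto intro: continuous_on_subset)

lemma C1_with_deriv_subset: "C1_with_deriv V S D \<Longrightarrow> T \<subseteq> S \<Longrightarrow> C1_with_deriv V T D"
  unfolding C1_with_deriv_def by (auto intro: continuous_on_subset)

lemma C2_withD:
  assumes "C2_with f S g H"
  shows "C1_with_grad f S g" "C1_with_deriv g S H"
proof -
  have dg: "\<forall>x\<in>S. (g has_derivative H x) (at x)" using assms unfolding C2_with_def by blast
  then have "continuous_on S g"
    by (auto intro!: continuous_at_imp_continuous_on has_derivative_continuous)
  then show "C1_with_grad f S g" using assms unfolding C2_with_def C1_with_grad_def by blast
  have "continuous_on S (\<lambda>x. H x i)" if i: "i \<in> Basis" for i
  proof -
    have "continuous_on S (\<lambda>x. \<Sum>j\<in>Basis. (H x i \<bullet> j) *\<^sub>R j)"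
      by (intro continuous_on_sum continuous_on_scaleR continuous_on_const)
         (use assms i in \<open>auto simp: C2_with_def\<close>)
    then show ?thesis by (simp add: euclidean_representation)
  qed
  with dg show "C1_with_deriv g S H" unfolding C1_with_deriv_def by blast
qed

lemma C1_with_grad_mult:
  assumes f: "C1_with_grad f S gf" and g: "C1_with_grad g S gg"
  shows "C1_with_grad (\<lambda>x. f x * g x) S (\<lambda>x. f x *\<^sub>R gg x + g x *\<^sub>R gf x)"
  unfolding C1_with_grad_def
proof (intro conjI ballI)
  fix x assume x: "x \<in> S"
  have "((\<lambda>x. f x * g x) has_derivative (\<lambda>h. f x * (gg x \<bullet> h) + (gf x \<bullet> h) * g x)) (at x)"
    using f g x unfolding C1_with_grad_def by (intro has_derivative_mult) auto
  then show "((\<lambda>x. f x * g x) has_derivative (\<lambda>h. (f x *\<^sub>R gg x + g x *\<^sub>R gf x) \<bullet> h)) (at x)"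
    by (simp add: inner_add_left algebra_simps)
next
  show "continuous_on S (\<lambda>x. f x *\<^sub>R gg x + g x *\<^sub>R gf x)"
    using f g C1_with_grad_continuous_on[OF f] C1_with_grad_continuous_on[OF g]
    unfolding C1_with_grad_def by (intro continuous_intros) auto
qed

lemma C1_with_grad_uminus:
  "C1_with_grad f S g \<Longrightarrow> C1_with_grad (\<lambda>x. - f x) S (\<lambda>x. - g x)"
  unfolding C1_with_grad_def by (auto intro!: continuous_intros derivative_eq_intros)

lemma C1_with_grad_inverse:
  assumes f: "C1_with_grad f S g" and nz: "\<And>x. x \<in> S \<Longrightarrow> f x \<noteq> 0"
  shows "C1_with_grad (\<lambda>x. inverse (f x)) S (\<lambda>x. - (inverse (f x) * inverse (f x)) *\<^sub>R g x)"
  unfolding C1_with_grad_def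
proof (intro conjI ballI)
  fix x assume x: "x \<in> S"
  have "(f has_derivative (\<lambda>h. g x \<bullet> h)) (at x)" using f x unfolding C1_with_grad_def by auto
  then have "((\<lambda>x. inverse (f x)) has_derivative (\<lambda>h. - (inverse (f x) * (g x \<bullet> h) * inverse (f x)))) (at x)"
    by (rule Deriv.has_derivative_inverse[rotated]) (use nz x in auto)
  then show "((\<lambda>x. inverse (f x)) has_derivative
      (\<lambda>h. (- (inverse (f x) * inverse (f x)) *\<^sub>R g x) \<bullet> h)) (at x)"
    by (simp add: algebra_simps)
next
  show "continuous_on S (\<lambda>x. - (inverse (f x) * inverse (f x)) *\<^sub>R g x)"
    using f nz C1_with_grad_continuous_on[OF f] unfolding C1_with_grad_def
    by (intro continuous_intros) auto
qed

lemma C1_with_deriv_scaleR: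
  assumes a: "C1_with_grad a S ga" and V: "C1_with_deriv V S D"
  shows "C1_with_deriv (\<lambda>x. a x *\<^sub>R V x) S (\<lambda>x h. (ga x \<bullet> h) *\<^sub>R V x + a x *\<^sub>R D x h)"
  unfolding C1_with_deriv_def
proof (intro conjI ballI)
  fix x assume x: "x \<in> S"
  have "((\<lambda>x. a x *\<^sub>R V x) has_derivative (\<lambda>h. a x *\<^sub>R D x h + (ga x \<bullet> h) *\<^sub>R V x)) (at x)"
    using a V x unfolding C1_with_grad_def C1_with_deriv_def by (intro has_derivative_scaleR) auto
  then show "((\<lambda>x. a x *\<^sub>R V x) has_derivative (\<lambda>h. (ga x \<bullet> h) *\<^sub>R V x + a x *\<^sub>R D x h)) (at x)"
    by (simp add: add.commute)
next
  fix i :: 'a assume "i \<in> Basis"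
  then show "continuous_on S (\<lambda>x. (ga x \<bullet> i) *\<^sub>R V x + a x *\<^sub>R D x i)"
    using a V C1_with_grad_continuous_on[OF a] C1_with_deriv_continuous_on[OF V]
    unfolding C1_with_grad_def C1_with_deriv_def by (auto intro!: continuous_intros)
qed

lemma C1_with_deriv_add:
  "C1_with_deriv V S D \<Longrightarrow> C1_with_deriv W S E \<Longrightarrow>
    C1_with_deriv (\<lambda>x. V x + W x) S (\<lambda>x h. D x h + E x h)"
  unfolding C1_with_deriv_def by (auto intro!: continuous_intros has_derivative_add)

lemma C2_with_divide:
  assumes f: "C2_with f S gf Hf" and g: "C2_with g S gg Hg" and nz: "\<And>x. x \<in> S \<Longrightarrow> g x \<noteq> 0"
  obtains q D where "C1_with_grad (\<lambda>x. f x / g x) S q" "C1_with_deriv q S D"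
proof -
  note f1 = C2_withD[OF f] and g1 = C2_withD[OF g]
  define c where "c x = - (inverse (g x) * inverse (g x))" for x
  have inv: "C1_with_grad (\<lambda>x. inverse (g x)) S (\<lambda>x. c x *\<^sub>R gg x)"
    unfolding c_def by (rule C1_with_grad_inverse[OF g1(1) nz])
  obtain gc where "C1_with_grad c S gc"
    unfolding c_def using C1_with_grad_uminus[OF C1_with_grad_mult[OF inv inv]] by blast
  from C1_with_deriv_scaleR[OF this g1(2)] obtain Dinv where Dinv: "C1_with_deriv (\<lambda>x. c x *\<^sub>R gg x) S Dinv"
    by blast
  have "C1_with_grad (\<lambda>x. f x * inverse (g x)) S (\<lambda>x. f x *\<^sub>R (c x *\<^sub>R gg x) + inverse (g x) *\<^sub>R gf x)"
    by (rule C1_with_grad_mult[OF f1(1) inv])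
  moreover obtain D where "C1_with_deriv (\<lambda>x. f x *\<^sub>R (c x *\<^sub>R gg x) + inverse (g x) *\<^sub>R gf x) S D"
    using C1_with_deriv_add[OF C1_with_deriv_scaleR[OF f1(1) Dinv] C1_with_deriv_scaleR[OF inv f1(2)]]
    by blast
  ultimately show thesis by (intro that) (simp_all add: divide_inverse)
qed

lemma grad_eqI:
  assumes "(f has_derivative (\<lambda>h. g \<bullet> h)) (at x)"
  shows "grad f x = g"
proof -
  have "frechet_derivative f (at x) = (\<lambda>h. g \<bullet> h)"
    using frechet_derivative_at[OF assms] by simp
  then show ?thesis by (simp add: grad_def euclidean_representation)
qed

lemma divg_eqI:
  assumes "(V has_derivative D) (at x)"
  shows "divg V x = (\<Sum>i\<in>Basis. D i \<bullet> i)"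
  using frechet_derivative_at[OF assms] by (simp add: divg_def)

lemma frechet_derivative_cong_open:
  assumes "open S" "x \<in> S" "\<And>y. y \<in> S \<Longrightarrow> f y = g y"
  shows "frechet_derivative f (at x) = frechet_derivative g (at x)"
proof -
  have "(f has_derivative D) (at x) \<longleftrightarrow> (g has_derivative D) (at x)" for D
    using assms has_derivative_transform_within_open[of _ D x UNIV S] by metis
  then show ?thesis unfolding frechet_derivative_def by simp
qed

lemma divg_cong_open:
  "open S \<Longrightarrow> x \<in> S \<Longrightarrow> (\<And>y. y \<in> S \<Longrightarrow> V y = W y) \<Longrightarrow> divg V x = divg W x"
  unfolding divg_def using frechet_derivative_cong_open by metis

lemma grad_cong_open:
  "open S \<Longrightarrow> x \<in> S \<Longrightarrow> (\<And>y. y \<in> S \<Longrightarrow> f y = g y) \<Longrightarrow> grad f x = grad g x"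
  unfolding grad_def using frechet_derivative_cong_open by metis

lemma weighted_flux_C1:
  fixes a u P :: "'a::euclidean_space \<Rightarrow> real"
  assumes S: "open S" and a: "C1_with_grad a S ga" and u: "C2_on u S" and P: "C2_on P S"
    and nz: "\<And>x. x \<in> S \<Longrightarrow> P x \<noteq> 0"
  obtains D where "C1_with_deriv (\<lambda>x. a x *\<^sub>R grad (\<lambda>z. u z / P z) x) S D"
    and "\<And>x. x \<in> S \<Longrightarrow> divg (\<lambda>y. a y *\<^sub>R grad (\<lambda>z. u z / P z) y) x = (\<Sum>i\<in>Basis. D x i \<bullet> i)"
proof -
  obtain gu Hu gP HP where "C2_with u S gu Hu" "C2_with P S gP HP"
    using u P unfolding C2_on_def by blast
  then obtain q Dq where q: "C1_with_grad (\<lambda>x. u x / P x) S q" and Dq: "C1_with_deriv q S Dq"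
    using nz by (rule C2_with_divide)
  have grad_q: "grad (\<lambda>z. u z / P z) x = q x" if "x \<in> S" for x
    using q that unfolding C1_with_grad_def by (auto intro: grad_eqI)
  obtain D where D: "C1_with_deriv (\<lambda>x. a x *\<^sub>R q x) S D"
    using C1_with_deriv_scaleR[OF a Dq] by blast
  show thesis
  proof (rule that)
    have "((\<lambda>x. a x *\<^sub>R grad (\<lambda>z. u z / P z) x) has_derivative D x) (at x)" if x: "x \<in> S" for x
    proof (rule has_derivative_transform_within_open[OF _ S x])
      show "((\<lambda>x. a x *\<^sub>R q x) has_derivative D x) (at x)"
        using D x unfolding C1_with_deriv_def by blast
    qed (simp add: grad_q)
    then show "C1_with_deriv (\<lambda>x. a x *\<^sub>R grad (\<lambda>z. u z / P z) x) S D"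
      using D unfolding C1_with_deriv_def by blast
  next
    fix x assume x: "x \<in> S"
    have "divg (\<lambda>y. a y *\<^sub>R grad (\<lambda>z. u z / P z) y) x = divg (\<lambda>y. a y *\<^sub>R q y) x"
      by (rule divg_cong_open[OF S x]) (simp add: grad_q)
    also have "\<dots> = (\<Sum>i\<in>Basis. D x i \<bullet> i)"
      using D x unfolding C1_with_deriv_def by (auto intro: divg_eqI)
    finally show "divg (\<lambda>y. a y *\<^sub>R grad (\<lambda>z. u z / P z) y) x = (\<Sum>i\<in>Basis. D x i \<bullet> i)" .
  qed
qed

section \<open>Compactly supported vector fields\<close>

lemma has_derivative_zero_outside_closed:
  fixes \<psi> :: "'a::real_normed_vector \<Rightarrow> 'b::real_normed_vector"
  assumes "(\<psi> has_derivative D) (at x)" "closed S" "x \<notin> S" "\<And>y. y \<notin> S \<Longrightarrow> \<psi> y = 0"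
  shows "D = (\<lambda>h. 0)"
proof -
  have "((\<lambda>_. 0) has_derivative (\<lambda>h. 0)) (at x)" by simp
  then have "(\<psi> has_derivative (\<lambda>h. 0)) (at x)"
    by (rule has_derivative_transform_within_open[where s="- S"]) (use assms in auto)
  then show ?thesis using assms(1) has_derivative_unique by blast
qed

lemma diff_scaleR_Basis_in_cbox:
  fixes y :: "'a::euclidean_space"
  assumes "y \<in> cbox (-a) a" "i \<in> Basis" "\<bar>t\<bar> \<le> 1"
  shows "y - t *\<^sub>R i \<in> cbox (- (a + One)) (a + One)"
  unfolding mem_box
proof
  fix j :: 'a assume j: "j \<in> Basis"
  have "\<bar>t * (i \<bullet> j)\<bar> \<le> 1" using assms(2,3) j by (auto simp: inner_Basis abs_mult)
  moreover have "- (a \<bullet> j) \<le> y \<bullet> j \<and> y \<bullet> j \<le> a \<bullet> j" using assms(1) j by (auto simp: mem_box)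
  ultimately show "- (a + One) \<bullet> j \<le> (y - t *\<^sub>R i) \<bullet> j \<and> (y - t *\<^sub>R i) \<bullet> j \<le> (a + One) \<bullet> j"
    using j by (auto simp: inner_diff_left inner_add_left inner_minus_left abs_le_iff)
qed

lemma integral_translate_vanishing_outside:
  fixes f :: "'a::euclidean_space \<Rightarrow> real"
  assumes f: "continuous_on UNIV f" "\<And>x. x \<notin> cbox (-a) a \<Longrightarrow> f x = 0"
    and i: "i \<in> Basis" and t: "\<bar>t\<bar> \<le> 1"
  shows "integral (cbox (- (a + One)) (a + One)) (\<lambda>x. f (x + t *\<^sub>R i)) = integral UNIV f"
proof -
  define c where "c = a + One"
  define I where "I = integral (cbox (-c) c) (\<lambda>x. f (x + t *\<^sub>R i))"
  have "((\<lambda>x. f (x + t *\<^sub>R i)) has_integral I) (cbox (-c) c)"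
    unfolding I_def
    by (rule integrable_integral, rule integrable_continuous)
       (intro continuous_on_compose2[OF f(1)] continuous_intros, auto)
  then have "((f \<circ> (+) (t *\<^sub>R i)) has_integral I) (cbox (-c) c)"
    by (simp add: o_def add.commute)
  then have "(f has_integral I) (cbox (-c + t *\<^sub>R i) (c + t *\<^sub>R i))"
    using has_integral_shift_cbox_iff by blast
  then have "(f has_integral I) UNIV"
  proof (rule has_integral_on_superset)
    show "cbox (-c + t *\<^sub>R i) (c + t *\<^sub>R i) \<subseteq> UNIV" by simp
    fix x assume x: "x \<notin> cbox (-c + t *\<^sub>R i) (c + t *\<^sub>R i)"
    show "f x = 0"
    proof (rule ccontr)
      assume "f x \<noteq> 0"
      then have "x - t *\<^sub>R i \<in> cbox (-c) c"
        unfolding c_def using f(2) diff_scaleR_Basis_in_cbox[OF _ i t] by blast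
      then have "t *\<^sub>R i + (x - t *\<^sub>R i) \<in> cbox (t *\<^sub>R i + -c) (t *\<^sub>R i + c)"
        unfolding cbox_translation by blast
      with x show False by (simp add: add.commute)
    qed
  qed
  then show ?thesis unfolding I_def c_def by (rule integral_unique[symmetric])
qed

lemma has_field_derivative_integral_translate:
  fixes \<psi> :: "'a::euclidean_space \<Rightarrow> 'a"
  assumes \<psi>: "C1_with_deriv \<psi> UNIV D" and i: "i \<in> Basis"
  shows "((\<lambda>t. integral (cbox a b) (\<lambda>x. \<psi> (x + t *\<^sub>R i) \<bullet> i))
           has_field_derivative integral (cbox a b) (\<lambda>x. D x i \<bullet> i)) (at 0)"
proof -
  have der: "(\<psi> has_derivative D x) (at x)" for x using \<psi> unfolding C1_with_deriv_def by blast
  have Dcont: "continuous_on UNIV (\<lambda>x. D x i \<bullet> i)"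
    using \<psi> i unfolding C1_with_deriv_def by (auto intro!: continuous_intros)
  have "((\<lambda>t. integral (cbox a b) (\<lambda>x. \<psi> (x + t *\<^sub>R i) \<bullet> i)) has_field_derivative
      integral (cbox a b) (\<lambda>x. D (x + 0 *\<^sub>R i) i \<bullet> i)) (at 0 within {-1..1})"
  proof (rule leibniz_rule_field_derivative)
    fix t x
    have "((\<lambda>t. \<psi> (x + t *\<^sub>R i)) has_derivative (\<lambda>s. D (x + t *\<^sub>R i) (s *\<^sub>R i))) (at t)"
      by (rule has_derivative_compose[OF _ der]) (auto intro!: derivative_eq_intros)
    then have "((\<lambda>t. \<psi> (x + t *\<^sub>R i) \<bullet> i) has_derivative (\<lambda>s. D (x + t *\<^sub>R i) (s *\<^sub>R i) \<bullet> i)) (at t)"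
      by (auto intro!: derivative_eq_intros)
    moreover have "(\<lambda>s. D (x + t *\<^sub>R i) (s *\<^sub>R i) \<bullet> i) = (*) (D (x + t *\<^sub>R i) i \<bullet> i)"
      using linear_scale[OF has_derivative_linear[OF der]] by (auto simp: fun_eq_iff)
    ultimately show "((\<lambda>t. \<psi> (x + t *\<^sub>R i) \<bullet> i) has_field_derivative D (x + t *\<^sub>R i) i \<bullet> i)
        (at t within {-1..1})"
      unfolding has_field_derivative_def by (auto intro: has_derivative_at_withinI)
  next
    show "(\<lambda>x. \<psi> (x + t *\<^sub>R i) \<bullet> i) integrable_on cbox a b" for t
      by (rule integrable_continuous)
         (intro continuous_on_compose2[OF C1_with_deriv_continuous_on[OF \<psi>]] continuous_intros, auto)
  next
    have "continuous_on ({-1..1} \<times> cbox a b) (\<lambda>p. (\<lambda>x. D x i \<bullet> i) (snd p + fst p *\<^sub>R i))"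
      by (rule continuous_on_compose2[OF Dcont]) (auto intro!: continuous_intros)
    then show "continuous_on ({-1..1} \<times> cbox a b) (\<lambda>(t, x). D (x + t *\<^sub>R i) i \<bullet> i)"
      by (simp add: split_beta)
  qed auto
  moreover have "at (0::real) within {-1..1} = at 0" by (rule at_within_interior) auto
  ultimately show ?thesis by simp
qed

text \<open>Translating along \<open>i\<close> does not change the integral of the compactly supported \<open>\<psi> \<bullet> i\<close>,
  so its derivative in the translation parameter, the integral of \<open>D x i \<bullet> i\<close>, vanishes.\<close>

lemma integral_partial_derivative_compact_support:
  fixes \<psi> :: "'a::euclidean_space \<Rightarrow> 'a"
  assumes \<psi>: "C1_with_deriv \<psi> UNIV D" and S: "compact S" "\<And>x. x \<notin> S \<Longrightarrow> \<psi> x = 0"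
    and i: "i \<in> Basis"
  shows "((\<lambda>x. D x i \<bullet> i) has_integral 0) UNIV"
proof -
  obtain a where a: "S \<subseteq> cbox (-a) a"
    using bounded_subset_cbox_symmetric[OF compact_imp_bounded[OF S(1)]] .
  then have vanish: "\<psi> x = 0" if "x \<notin> cbox (-a) a" for x using that S(2) by blast
  define B where "B = cbox (- (a + One)) (a + One)"
  define T where "T t = integral B (\<lambda>x. \<psi> (x + t *\<^sub>R i) \<bullet> i)" for t
  have "(T has_field_derivative integral B (\<lambda>x. D x i \<bullet> i)) (at 0)"
    unfolding T_def B_def by (rule has_field_derivative_integral_translate[OF \<psi> i])
  moreover have "(T has_field_derivative 0) (at 0)"
  proof (rule has_field_derivative_transform_within_open[where S="{-1<..<1}"])
    show "integral UNIV (\<lambda>x. \<psi> x \<bullet> i) = T t" if "t \<in> {-1<..<1}" for t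
    proof -
      have "continuous_on UNIV (\<lambda>x. \<psi> x \<bullet> i)"
        by (intro continuous_intros C1_with_deriv_continuous_on[OF \<psi>])
      moreover have "\<bar>t\<bar> \<le> 1" using that by auto
      ultimately show ?thesis
        unfolding T_def B_def using vanish by (intro integral_translate_vanishing_outside[OF _ _ i, symmetric]) auto
    qed
  qed auto
  ultimately have "integral B (\<lambda>x. D x i \<bullet> i) = 0" using DERIV_unique by blast
  moreover have "(\<lambda>x. D x i \<bullet> i) integrable_on B"
    unfolding B_def using \<psi> i unfolding C1_with_deriv_def
    by (intro integrable_continuous continuous_intros) (auto intro: continuous_on_subset)
  ultimately have "((\<lambda>x. D x i \<bullet> i) has_integral 0) B" by (metis integrable_integral)
  then show ?thesis
  proof (rule has_integral_on_superset)
    fix x assume x: "x \<notin> B"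
    have "x \<notin> S"
    proof
      assume "x \<in> S"
      then have "x - 0 *\<^sub>R i \<in> B" unfolding B_def using a i by (intro diff_scaleR_Basis_in_cbox) auto
      with x show False by simp
    qed
    have "(\<psi> has_derivative D x) (at x)" using \<psi> unfolding C1_with_deriv_def by blast
    then have "D x = (\<lambda>h. 0)"
      by (rule has_derivative_zero_outside_closed[OF _ compact_imp_closed[OF S(1)] \<open>x \<notin> S\<close> S(2)])
    then show "D x i \<bullet> i = 0" by simp
  qed simp
qed

lemma integral_divergence_compact_support:
  fixes \<psi> :: "'a::euclidean_space \<Rightarrow> 'a"
  assumes "C1_with_deriv \<psi> UNIV D" "compact S" "\<And>x. x \<notin> S \<Longrightarrow> \<psi> x = 0"
  shows "((\<lambda>x. \<Sum>i\<in>Basis. D x i \<bullet> i) has_integral 0) UNIV"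
  using has_integral_sum[of Basis "\<lambda>i x. D x i \<bullet> i" "\<lambda>_. 0" UNIV]
    integral_partial_derivative_compact_support[OF assms] by simp

lemma integrable_on_if_continuous_on_closure:
  fixes h :: "'a::euclidean_space \<Rightarrow> real"
  assumes "open \<Omega>" "bounded \<Omega>" "continuous_on (closure \<Omega>) h"
  shows "h integrable_on \<Omega>"
proof -
  obtain B where B: "\<forall>x\<in>closure \<Omega>. norm (h x) \<le> B"
    using compact_imp_bounded[OF compact_continuous_image[OF assms(3)]] assms(2)
    unfolding bounded_iff compact_closure by auto
  have L: "\<Omega> \<in> lmeasurable" using lmeasurable_open assms(1,2) by blast
  show ?thesis
  proof (rule measurable_bounded_by_integrable_imp_integrable[where g="\<lambda>_. B"])
    show "\<Omega> \<in> sets lebesgue" using L by (rule fmeasurableD)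
    then show "h \<in> borel_measurable (lebesgue_on \<Omega>)"
      by (rule continuous_imp_measurable_on_sets_lebesgue[OF continuous_on_subset[OF assms(3) closure_subset]])
    show "(\<lambda>_. B) integrable_on \<Omega>" using L by (rule integrable_on_const)
    show "norm (h x) \<le> B" if "x \<in> \<Omega>" for x using B closure_subset that by blast
  qed
qed

lemma integral_pos_if_pos_at:
  fixes h :: "'a::euclidean_space \<Rightarrow> real"
  assumes \<Omega>: "open \<Omega>" and h: "continuous_on \<Omega> h" "h integrable_on \<Omega>" "\<And>x. x \<in> \<Omega> \<Longrightarrow> 0 \<le> h x"
    and x0: "x0 \<in> \<Omega>" "0 < h x0"
  shows "0 < integral \<Omega> h"
proof -
  define U where "U = h -` {h x0 / 2<..} \<inter> \<Omega>"
  have "open U"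
    unfolding U_def using h(1) continuous_on_open_vimage[OF \<Omega>, of h] open_greaterThan by simp
  moreover have "x0 \<in> U" using x0 by (simp add: U_def)
  ultimately obtain a b where ab: "cbox a b \<subseteq> U" "\<forall>i\<in>Basis. a \<bullet> i < b \<bullet> i"
    by (rule open_contains_cbox)
  have sub: "cbox a b \<subseteq> \<Omega>" and above: "\<And>y. y \<in> cbox a b \<Longrightarrow> h x0 / 2 < h y"
    using ab(1) by (auto simp: U_def)
  have "((\<lambda>y. if y \<in> cbox a b then h x0 / 2 else 0) has_integral measure lborel (cbox a b) *\<^sub>R (h x0 / 2)) \<Omega>"
    by (rule has_integral_restrict[OF sub, THEN iffD2, OF has_integral_const])
  moreover have "(h has_integral integral \<Omega> h) \<Omega>" using h(2) by (rule integrable_integral)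
  moreover have "(if y \<in> cbox a b then h x0 / 2 else 0) \<le> h y" if "y \<in> \<Omega>" for y
    using above[of y] h(3)[OF that] by (simp add: less_imp_le)
  ultimately have "measure lborel (cbox a b) *\<^sub>R (h x0 / 2) \<le> integral \<Omega> h"
    by (rule has_integral_le)
  moreover have "0 < measure lborel (cbox a b) * (h x0 / 2)"
    using content_pos_lt[OF ab(2)] x0(2) by simp
  ultimately show ?thesis by simp
qed

lemma compact_pos_lower_bound:
  fixes h :: "'a::topological_space \<Rightarrow> real"
  assumes "compact K" "continuous_on K h" "\<And>x. x \<in> K \<Longrightarrow> 0 < h x"
  shows "\<exists>c>0. \<forall>x\<in>K. c \<le> h x"
proof (cases "K = {}")
  case False
  then obtain x0 where "x0 \<in> K" "\<And>y. y \<in> K \<Longrightarrow> h x0 \<le> h y"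
    using continuous_attains_inf[OF assms(1) _ assms(2)] by blast
  with assms(3) show ?thesis by blast
qed (use zero_less_one in blast)

lemma compact_bound_near_zero_set:
  fixes \<rho> h :: "'a::t2_space \<Rightarrow> real"
  assumes K: "compact K" and cont: "continuous_on K \<rho>" "continuous_on K h"
    and nonpos: "\<And>x. x \<in> K \<Longrightarrow> \<rho> x \<le> 0" and zero: "\<And>x. x \<in> K \<Longrightarrow> \<rho> x = 0 \<Longrightarrow> h x < \<delta>"
  shows "\<exists>e>0. \<forall>x\<in>K. -e < \<rho> x \<longrightarrow> h x < \<delta>"
proof -
  define C where "C = K \<inter> h -` {\<delta>..}"
  have "closed C"
    unfolding C_def by (rule continuous_closed_preimage[OF cont(2) compact_imp_closed[OF K]]) simp
  then have "compact C" using compact_Int_closed[OF K \<open>closed C\<close>] by (simp add: C_def Int_assoc[symmetric])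
  moreover have "continuous_on C (\<lambda>x. - \<rho> x)"
    unfolding C_def by (intro continuous_intros continuous_on_subset[OF cont(1)]) auto
  moreover have "0 < - \<rho> x" if "x \<in> C" for x
  proof -
    have "x \<in> K" "\<delta> \<le> h x" using that by (auto simp: C_def)
    with nonpos[of x] zero[of x] show ?thesis by fastforce
  qed
  ultimately obtain e where e: "0 < e" "\<And>x. x \<in> C \<Longrightarrow> e \<le> - \<rho> x"
    using compact_pos_lower_bound[of C "\<lambda>x. - \<rho> x"] by blast
  have "h x < \<delta>" if "x \<in> K" "-e < \<rho> x" for x
    using that e(2)[of x] by (force simp: C_def)
  with e(1) show ?thesis by blast
qed

lemma closure_sublevel_subset:
  fixes \<rho> :: "'a::topological_space \<Rightarrow> real"
  assumes "continuous_on UNIV \<rho>"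
  shows "closure {x. \<rho> x < 0} \<subseteq> {x. \<rho> x \<le> 0}"
  by (rule closure_minimal) (auto intro: closed_Collect_le assms)

section \<open>Cut-offs near the boundary and the divergence theorem\<close>

text \<open>The gradient of \<open>cutoff \<rho> \<epsilon>\<close> is \<open>- layer_weight \<rho> \<epsilon> *\<^sub>R \<nabla>\<rho>\<close>, see \<open>C1_with_grad_cutoff\<close>.\<close>

definition cutoff :: "('a \<Rightarrow> real) \<Rightarrow> real \<Rightarrow> 'a \<Rightarrow> real" where
  "cutoff \<rho> \<epsilon> x = smooth_step (\<rho> x / \<epsilon>)"

definition layer_weight :: "('a \<Rightarrow> real) \<Rightarrow> real \<Rightarrow> 'a \<Rightarrow> real" where
  "layer_weight \<rho> \<epsilon> x = - smooth_step' (\<rho> x / \<epsilon>) / \<epsilon>"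

lemma cutoff_nonneg: "0 \<le> cutoff \<rho> \<epsilon> x"
  and cutoff_le_one: "cutoff \<rho> \<epsilon> x \<le> 1"
  by (simp_all add: cutoff_def smooth_step_nonneg smooth_step_le_one)

lemma cutoff_eq_1: "0 < \<epsilon> \<Longrightarrow> \<rho> x \<le> -2 * \<epsilon> \<Longrightarrow> cutoff \<rho> \<epsilon> x = 1"
  by (simp add: cutoff_def smooth_step_eq_1 divide_le_eq)

lemma cutoff_layer_weight_eq_0:
  assumes "0 < \<epsilon>" "- \<epsilon> \<le> \<rho> x"
  shows "cutoff \<rho> \<epsilon> x = 0" "layer_weight \<rho> \<epsilon> x = 0"
proof -
  have "-1 \<le> \<rho> x / \<epsilon>" using assms by (simp add: le_divide_eq)
  then show "cutoff \<rho> \<epsilon> x = 0" "layer_weight \<rho> \<epsilon> x = 0"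
    unfolding cutoff_def layer_weight_def using smooth_step_eq_0 smooth_step'_nonzeroD by force+
qed

lemma layer_weight_nonneg: "0 < \<epsilon> \<Longrightarrow> 0 \<le> layer_weight \<rho> \<epsilon> x"
  using smooth_step'_nonpos[of "\<rho> x / \<epsilon>"] by (simp add: layer_weight_def divide_nonpos_pos)

lemma layer_weight_nonzeroD:
  assumes "0 < \<epsilon>" "layer_weight \<rho> \<epsilon> x \<noteq> 0"
  shows "-2 * \<epsilon> < \<rho> x"
proof -
  have "-2 < \<rho> x / \<epsilon>" using assms(2) smooth_step'_nonzeroD by (force simp: layer_weight_def)
  then show ?thesis using assms(1) by (simp add: less_divide_eq)
qed

lemma layer_weight_mult_mono:
  assumes "0 < \<epsilon>" "-2 * \<epsilon> < \<rho> x \<Longrightarrow> a \<le> b"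
  shows "layer_weight \<rho> \<epsilon> x * a \<le> layer_weight \<rho> \<epsilon> x * b"
proof (cases "layer_weight \<rho> \<epsilon> x = 0")
  case False
  have "a \<le> b" by (rule assms(2)[OF layer_weight_nonzeroD[OF assms(1) False]])
  then show ?thesis using layer_weight_nonneg[OF assms(1)] by (rule mult_left_mono)
qed simp

lemma continuous_on_cutoff:
  "continuous_on UNIV \<rho> \<Longrightarrow> continuous_on UNIV (cutoff \<rho> \<epsilon>)"
  unfolding cutoff_def[abs_def] divide_inverse
  by (rule continuous_on_compose2[OF continuous_on_smooth_step]) (auto intro!: continuous_intros)

lemma continuous_on_layer_weight:
  "continuous_on UNIV \<rho> \<Longrightarrow> continuous_on UNIV (layer_weight \<rho> \<epsilon>)"
  unfolding layer_weight_def[abs_def] divide_inverse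
  by (intro continuous_intros continuous_on_compose2[OF continuous_on_smooth_step']) auto

lemma C1_with_grad_cutoff:
  assumes \<rho>: "C1_with_grad \<rho> UNIV g" and \<epsilon>: "0 < \<epsilon>"
  shows "C1_with_grad (cutoff \<rho> \<epsilon>) UNIV (\<lambda>x. - layer_weight \<rho> \<epsilon> x *\<^sub>R g x)"
  unfolding C1_with_grad_def
proof (intro conjI ballI)
  fix x :: 'a
  have "((\<lambda>x. \<rho> x / \<epsilon>) has_derivative (\<lambda>h. (g x \<bullet> h) / \<epsilon>)) (at x)"
    using \<rho> \<epsilon> unfolding C1_with_grad_def by (auto intro!: derivative_eq_intros)
  from has_derivative_compose[OF this has_real_derivative_smooth_step[unfolded has_field_derivative_def]]
  show "(cutoff \<rho> \<epsilon> has_derivative (\<lambda>h. (- layer_weight \<rho> \<epsilon> x *\<^sub>R g x) \<bullet> h)) (at x)"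
    by (simp add: cutoff_def[abs_def] layer_weight_def)
next
  show "continuous_on UNIV (\<lambda>x. - layer_weight \<rho> \<epsilon> x *\<^sub>R g x)"
    using \<rho> continuous_on_layer_weight[OF C1_with_grad_continuous_on[OF \<rho>]]
    unfolding C1_with_grad_def by (intro continuous_intros) auto
qed

lemma C1_with_deriv_extend_zero:
  fixes V :: "'a::euclidean_space \<Rightarrow> 'a"
  assumes \<Omega>: "open \<Omega>" and V: "C1_with_deriv V \<Omega> D" and N: "open N" "- \<Omega> \<subseteq> N"
    and vanish: "\<And>x. x \<in> N \<Longrightarrow> x \<in> \<Omega> \<Longrightarrow> V x = 0" "\<And>x. x \<in> N \<Longrightarrow> x \<in> \<Omega> \<Longrightarrow> D x = (\<lambda>h. 0)"
  shows "C1_with_deriv (\<lambda>x. if x \<in> \<Omega> then V x else 0) UNIV (\<lambda>x. if x \<in> \<Omega> then D x else (\<lambda>h. 0))"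
  unfolding C1_with_deriv_def
proof (intro conjI ballI)
  fix x :: 'a
  show "((\<lambda>x. if x \<in> \<Omega> then V x else 0) has_derivative (if x \<in> \<Omega> then D x else (\<lambda>h. 0))) (at x)"
  proof (cases "x \<in> \<Omega>")
    case True
    have "(V has_derivative D x) (at x)" using V True unfolding C1_with_deriv_def by blast
    then have "((\<lambda>x. if x \<in> \<Omega> then V x else 0) has_derivative D x) (at x)"
      by (rule has_derivative_transform_within_open[OF _ \<Omega> True]) simp
    with True show ?thesis by simp
  next
    case False
    then have "x \<in> N" using N(2) by blast
    have "((\<lambda>_. 0) has_derivative (\<lambda>h. 0)) (at x)" by simp
    then have "((\<lambda>x. if x \<in> \<Omega> then V x else 0) has_derivative (\<lambda>h. 0)) (at x)"
      by (rule has_derivative_transform_within_open[OF _ N(1) \<open>x \<in> N\<close>]) (simp add: vanish(1))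
    with False show ?thesis by simp
  qed
next
  fix i :: 'a assume i: "i \<in> Basis"
  let ?Di = "\<lambda>x. if x \<in> \<Omega> then D x i else 0"
  have "continuous_on \<Omega> (\<lambda>x. D x i)" using V i unfolding C1_with_deriv_def by blast
  then have "continuous_on \<Omega> ?Di" by (rule continuous_on_eq) simp
  moreover have "continuous_on N ?Di"
    by (rule continuous_on_eq[OF continuous_on_const]) (simp add: vanish(2))
  ultimately have "continuous_on (\<Omega> \<union> N) ?Di" by (rule continuous_on_open_Un[OF \<Omega> N(1)])
  moreover have "\<Omega> \<union> N = UNIV" using N(2) by blast
  moreover have "(\<lambda>x. (if x \<in> \<Omega> then D x else (\<lambda>h. 0)) i) = ?Di" by (simp add: fun_eq_iff)
  ultimately show "continuous_on UNIV (\<lambda>x. (if x \<in> \<Omega> then D x else (\<lambda>h. 0)) i)"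
    by (simp only:)
qed

lemma cutoff_divergence_integral:
  fixes \<Omega> :: "'a::euclidean_space set"
  assumes \<Omega>: "open \<Omega>" "bounded \<Omega>" "\<Omega> = {x. \<rho> x < 0}"
    and \<rho>: "C1_with_grad \<rho> UNIV g" and \<epsilon>: "0 < \<epsilon>" and V: "C1_with_deriv V \<Omega> D"
  shows "((\<lambda>x. cutoff \<rho> \<epsilon> x * (\<Sum>i\<in>Basis. D x i \<bullet> i) - layer_weight \<rho> \<epsilon> x * (g x \<bullet> V x))
           has_integral 0) \<Omega>"
proof -
  let ?\<phi> = "cutoff \<rho> \<epsilon>" and ?k = "layer_weight \<rho> \<epsilon>"
  define D\<phi> where "D\<phi> x h = ((- ?k x *\<^sub>R g x) \<bullet> h) *\<^sub>R V x + ?\<phi> x *\<^sub>R D x h" for x h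
  have \<phi>V: "C1_with_deriv (\<lambda>x. ?\<phi> x *\<^sub>R V x) \<Omega> D\<phi>"
    unfolding D\<phi>_def[abs_def]
    by (rule C1_with_deriv_scaleR[OF C1_with_grad_subset[OF C1_with_grad_cutoff[OF \<rho> \<epsilon>]] V]) simp
  have \<rho>_cont: "continuous_on UNIV \<rho>" by (rule C1_with_grad_continuous_on[OF \<rho>])
  define N where "N = {x. - \<epsilon> < \<rho> x}"
  have "open N" unfolding N_def by (rule open_Collect_less) (auto intro: \<rho>_cont)
  moreover have "- \<Omega> \<subseteq> N" using \<Omega>(3) \<epsilon> by (auto simp: N_def)
  moreover have "?\<phi> x *\<^sub>R V x = 0" "D\<phi> x = (\<lambda>h. 0)" if "x \<in> N" "x \<in> \<Omega>" for x
    using cutoff_layer_weight_eq_0[OF \<epsilon>, of \<rho> x] that(1) by (auto simp: N_def D\<phi>_def)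
  ultimately have ext: "C1_with_deriv (\<lambda>x. if x \<in> \<Omega> then ?\<phi> x *\<^sub>R V x else 0) UNIV
      (\<lambda>x. if x \<in> \<Omega> then D\<phi> x else (\<lambda>h. 0))"
    by (rule C1_with_deriv_extend_zero[OF \<Omega>(1) \<phi>V])
  define S where "S = {x. \<rho> x \<le> - \<epsilon>}"
  have "S \<subseteq> \<Omega>" using \<epsilon> \<Omega>(3) by (auto simp: S_def)
  moreover have "closed S" unfolding S_def by (rule closed_Collect_le) (auto intro: \<rho>_cont)
  ultimately have "compact S" using \<Omega>(2) bounded_subset compact_eq_bounded_closed by blast
  moreover have "(if x \<in> \<Omega> then ?\<phi> x *\<^sub>R V x else 0) = 0" if "x \<notin> S" for x
    using that cutoff_layer_weight_eq_0[OF \<epsilon>, of \<rho> x] by (auto simp: S_def)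
  ultimately have "((\<lambda>x. \<Sum>i\<in>Basis. (if x \<in> \<Omega> then D\<phi> x else (\<lambda>h. 0)) i \<bullet> i) has_integral 0) UNIV"
    by (rule integral_divergence_compact_support[OF ext])
  moreover have "(\<Sum>i\<in>Basis. (if x \<in> \<Omega> then D\<phi> x else (\<lambda>h. 0)) i \<bullet> i)
      = (if x \<in> \<Omega> then ?\<phi> x * (\<Sum>i\<in>Basis. D x i \<bullet> i) - ?k x * (g x \<bullet> V x) else 0)" for x
  proof -
    have "D\<phi> x i \<bullet> i = ?\<phi> x * (D x i \<bullet> i) - ?k x * ((g x \<bullet> i) * (V x \<bullet> i))" for i
      by (simp add: D\<phi>_def inner_add_left algebra_simps)
    then have "(\<Sum>i\<in>Basis. D\<phi> x i \<bullet> i)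
        = ?\<phi> x * (\<Sum>i\<in>Basis. D x i \<bullet> i) - ?k x * (\<Sum>i\<in>Basis. (g x \<bullet> i) * (V x \<bullet> i))"
      by (simp add: sum_subtractf sum_distrib_left)
    then show ?thesis by (simp add: euclidean_inner[symmetric])
  qed
  ultimately show ?thesis by (simp add: has_integral_restrict_UNIV)
qed

lemma bound_near_boundary:
  fixes \<Omega> :: "'a::euclidean_space set" and \<rho> h :: "'a \<Rightarrow> real"
  assumes \<Omega>: "bounded \<Omega>" "\<Omega> = {x. \<rho> x < 0}" "frontier \<Omega> = {x. \<rho> x = 0}"
    and \<rho>: "continuous_on UNIV \<rho>" and h: "continuous_on (closure \<Omega>) h"
    and frontier: "\<And>x. x \<in> frontier \<Omega> \<Longrightarrow> h x < \<delta>"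
  shows "\<exists>e>0. \<forall>x\<in>closure \<Omega>. -e < \<rho> x \<longrightarrow> h x < \<delta>"
proof (rule compact_bound_near_zero_set)
  show "compact (closure \<Omega>)" using \<Omega>(1) by (simp add: compact_closure)
  show "continuous_on (closure \<Omega>) \<rho>" "continuous_on (closure \<Omega>) h"
    by (rule continuous_on_subset[OF \<rho> subset_UNIV], rule h)
  show "\<rho> x \<le> 0" if "x \<in> closure \<Omega>" for x
    using that closure_sublevel_subset[OF \<rho>] \<Omega>(2) by auto
  show "h x < \<delta>" if "\<rho> x = 0" for x using that \<Omega>(3) frontier by simp
qed

lemma layer_weight_grad_integral_le:
  fixes \<Omega> :: "'a::euclidean_space set"
  assumes \<Omega>: "open \<Omega>" "bounded \<Omega>" "\<Omega> = {x. \<rho> x < 0}"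
    and \<rho>: "C1_with_grad \<rho> UNIV g" and g: "C1_with_deriv g UNIV H" and \<epsilon>: "0 < \<epsilon>"
  shows "integral \<Omega> (\<lambda>x. layer_weight \<rho> \<epsilon> x * (g x \<bullet> g x)) \<le> integral \<Omega> (\<lambda>x. \<bar>\<Sum>i\<in>Basis. H x i \<bullet> i\<bar>)"
proof -
  let ?\<phi> = "cutoff \<rho> \<epsilon>" and ?k = "layer_weight \<rho> \<epsilon>"
  define \<Delta> where "\<Delta> x = (\<Sum>i\<in>Basis. H x i \<bullet> i)" for x
  have \<rho>_cont: "continuous_on UNIV \<rho>" by (rule C1_with_grad_continuous_on[OF \<rho>])
  have g_cont: "continuous_on UNIV g" using \<rho> unfolding C1_with_grad_def by blast
  have \<Delta>_cont: "continuous_on UNIV \<Delta>"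
    using g unfolding \<Delta>_def[abs_def] C1_with_deriv_def by (intro continuous_intros) auto
  have int: "h integrable_on \<Omega>" if "continuous_on UNIV h" for h :: "'a \<Rightarrow> real"
    using integrable_on_if_continuous_on_closure[OF \<Omega>(1,2) continuous_on_subset[OF that]] by simp
  have kgg_int: "(\<lambda>x. ?k x * (g x \<bullet> g x)) integrable_on \<Omega>"
    by (rule int) (intro continuous_intros continuous_on_layer_weight \<rho>_cont g_cont)
  have \<phi>\<Delta>_int: "(\<lambda>x. ?\<phi> x * \<Delta> x) integrable_on \<Omega>"
    by (rule int) (intro continuous_intros continuous_on_cutoff \<rho>_cont \<Delta>_cont)
  have "((\<lambda>x. ?\<phi> x * \<Delta> x - ?k x * (g x \<bullet> g x)) has_integral 0) \<Omega>"
    unfolding \<Delta>_def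
    by (rule cutoff_divergence_integral[OF \<Omega> \<rho> \<epsilon> C1_with_deriv_subset[OF g]]) simp
  then have "integral \<Omega> (\<lambda>x. ?k x * (g x \<bullet> g x)) = integral \<Omega> (\<lambda>x. ?\<phi> x * \<Delta> x)"
    using integral_diff[OF \<phi>\<Delta>_int kgg_int] by (simp add: integral_unique)
  also have "\<dots> \<le> integral \<Omega> (\<lambda>x. \<bar>\<Delta> x\<bar>)"
  proof (rule integral_le[OF \<phi>\<Delta>_int int])
    show "continuous_on UNIV (\<lambda>x. \<bar>\<Delta> x\<bar>)" by (intro continuous_intros \<Delta>_cont)
    show "?\<phi> x * \<Delta> x \<le> \<bar>\<Delta> x\<bar>" for x
    proof -
      have "?\<phi> x * \<Delta> x \<le> ?\<phi> x * \<bar>\<Delta> x\<bar>" using cutoff_nonneg by (rule mult_left_mono[OF abs_ge_self])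
      also have "\<dots> \<le> \<bar>\<Delta> x\<bar>" using cutoff_nonneg cutoff_le_one by (rule mult_left_le_one_le[OF abs_ge_zero])
      finally show ?thesis .
    qed
  qed
  finally show ?thesis unfolding \<Delta>_def .
qed

lemma layer_weight_integral_bounded:
  fixes \<Omega> :: "'a::euclidean_space set"
  assumes \<Omega>: "open \<Omega>" "bounded \<Omega>" "\<Omega> = {x. \<rho> x < 0}" "frontier \<Omega> = {x. \<rho> x = 0}"
    and \<rho>: "C1_with_grad \<rho> UNIV g" and g: "C1_with_deriv g UNIV H"
    and g_nz: "\<And>x. x \<in> frontier \<Omega> \<Longrightarrow> g x \<noteq> 0"
  obtains C e where "0 < C" "0 < e" "\<And>\<epsilon>. 0 < \<epsilon> \<Longrightarrow> \<epsilon> \<le> e \<Longrightarrow> integral \<Omega> (layer_weight \<rho> \<epsilon>) \<le> C"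
proof -
  have \<rho>_cont: "continuous_on UNIV \<rho>" by (rule C1_with_grad_continuous_on[OF \<rho>])
  have g_cont: "continuous_on UNIV g" using \<rho> unfolding C1_with_grad_def by blast
  have "\<exists>c>0. \<forall>x\<in>frontier \<Omega>. c \<le> g x \<bullet> g x"
  proof (rule compact_pos_lower_bound[OF compact_frontier_bounded[OF \<Omega>(2)]])
    show "continuous_on (frontier \<Omega>) (\<lambda>x. g x \<bullet> g x)"
      by (intro continuous_intros continuous_on_subset[OF g_cont] subset_UNIV)
    show "0 < g x \<bullet> g x" if "x \<in> frontier \<Omega>" for x using g_nz[OF that] by simp
  qed
  then obtain c where c: "0 < c" "\<And>x. x \<in> frontier \<Omega> \<Longrightarrow> c \<le> g x \<bullet> g x" by blast
  have "- (g x \<bullet> g x) < - (c / 2)" if "x \<in> frontier \<Omega>" for x using c(2)[OF that] c(1) by simp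
  then have "\<exists>e>0. \<forall>x\<in>closure \<Omega>. -e < \<rho> x \<longrightarrow> - (g x \<bullet> g x) < - (c / 2)"
    by (intro bound_near_boundary[OF \<Omega>(2-4) \<rho>_cont])
       (auto intro!: continuous_intros continuous_on_subset[OF g_cont])
  then obtain e where e: "0 < e" "\<And>x. x \<in> closure \<Omega> \<Longrightarrow> -e < \<rho> x \<Longrightarrow> c / 2 < g x \<bullet> g x"
    by auto
  define M where "M = integral \<Omega> (\<lambda>x. \<bar>\<Sum>i\<in>Basis. H x i \<bullet> i\<bar>)"
  show thesis
  proof (rule that[of "2 * M / c + 1" "e / 2"])
    have "0 \<le> M"
      unfolding M_def using g unfolding C1_with_deriv_def
      by (intro integral_nonneg integrable_on_if_continuous_on_closure[OF \<Omega>(1,2)] continuous_intros)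
         (auto intro: continuous_on_subset)
    then show "0 < 2 * M / c + 1" using c(1) by (simp add: add_nonneg_pos)
    show "0 < e / 2" using e(1) by simp
  next
    fix \<epsilon> :: real assume \<epsilon>: "0 < \<epsilon>" "\<epsilon> \<le> e / 2"
    let ?k = "layer_weight \<rho> \<epsilon>"
    have k_int: "?k integrable_on \<Omega>"
      by (intro integrable_on_if_continuous_on_closure[OF \<Omega>(1,2)] continuous_on_subset[OF
          continuous_on_layer_weight[OF \<rho>_cont]] subset_UNIV)
    have "integral \<Omega> (\<lambda>x. c / 2 * ?k x) \<le> integral \<Omega> (\<lambda>x. ?k x * (g x \<bullet> g x))"
    proof (rule integral_le[OF integrable_on_mult_right[OF k_int]])
      show "(\<lambda>x. ?k x * (g x \<bullet> g x)) integrable_on \<Omega>"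
        by (intro integrable_on_if_continuous_on_closure[OF \<Omega>(1,2)] continuous_intros
            continuous_on_subset[OF continuous_on_layer_weight[OF \<rho>_cont]] continuous_on_subset[OF g_cont])
          auto
      fix x assume x: "x \<in> \<Omega>"
      have "c / 2 \<le> g x \<bullet> g x" if "-2 * \<epsilon> < \<rho> x"
      proof -
        have "-e < \<rho> x" using that \<epsilon>(2) by linarith
        then show ?thesis using e(2)[of x] x closure_subset by (blast intro: less_imp_le)
      qed
      from layer_weight_mult_mono[OF \<epsilon>(1) this]
      show "c / 2 * ?k x \<le> ?k x * (g x \<bullet> g x)" by (simp add: mult.commute)
    qed
    also have "\<dots> \<le> M" unfolding M_def by (rule layer_weight_grad_integral_le[OF \<Omega>(1-3) \<rho> g \<epsilon>(1)])
    finally have "c / 2 * integral \<Omega> ?k \<le> M" by (simp add: integral_mult_right)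
    then show "integral \<Omega> ?k \<le> 2 * M / c + 1" using c(1) by (simp add: field_simps)
  qed
qed

lemma cutoff_integral_small:
  fixes \<Omega> :: "'a::euclidean_space set"
  assumes \<Omega>: "open \<Omega>" "bounded \<Omega>" "\<Omega> = {x. \<rho> x < 0}" "frontier \<Omega> = {x. \<rho> x = 0}"
    and \<rho>: "C1_with_grad \<rho> UNIV g" and g: "C1_with_deriv g UNIV H"
    and g_nz: "\<And>x. x \<in> frontier \<Omega> \<Longrightarrow> g x \<noteq> 0"
    and V: "C1_with_deriv V \<Omega> D"
    and W: "continuous_on (closure \<Omega>) W" "\<And>x. x \<in> \<Omega> \<Longrightarrow> W x = V x"
    and tangential: "\<And>x. x \<in> frontier \<Omega> \<Longrightarrow> W x \<bullet> g x = 0"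
    and f: "continuous_on (closure \<Omega>) f" "\<And>x. x \<in> \<Omega> \<Longrightarrow> f x = (\<Sum>i\<in>Basis. D x i \<bullet> i)"
    and \<delta>: "0 < \<delta>"
  obtains e where "0 < e" "\<And>\<epsilon>. 0 < \<epsilon> \<Longrightarrow> \<epsilon> \<le> e \<Longrightarrow> \<bar>integral \<Omega> (\<lambda>x. cutoff \<rho> \<epsilon> x * f x)\<bar> \<le> \<delta>"
proof -
  obtain C e0 where C: "0 < C" "0 < e0"
    and mass: "\<And>\<epsilon>. 0 < \<epsilon> \<Longrightarrow> \<epsilon> \<le> e0 \<Longrightarrow> integral \<Omega> (layer_weight \<rho> \<epsilon>) \<le> C"
    using layer_weight_integral_bounded[OF \<Omega> \<rho> g g_nz] by blast
  have \<rho>_cont: "continuous_on UNIV \<rho>" by (rule C1_with_grad_continuous_on[OF \<rho>])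
  have g_cont: "continuous_on UNIV g" using \<rho> unfolding C1_with_grad_def by blast
  have int: "h integrable_on \<Omega>" if "continuous_on (closure \<Omega>) h" for h :: "'a \<Rightarrow> real"
    by (rule integrable_on_if_continuous_on_closure[OF \<Omega>(1,2) that])
  have Wg_cont: "continuous_on (closure \<Omega>) (\<lambda>x. W x \<bullet> g x)"
    by (intro continuous_intros W(1) continuous_on_subset[OF g_cont] subset_UNIV)
  have "\<exists>e>0. \<forall>x\<in>closure \<Omega>. -e < \<rho> x \<longrightarrow> \<bar>W x \<bullet> g x\<bar> < \<delta> / C"
    using tangential \<delta> C(1) by (intro bound_near_boundary[OF \<Omega>(2-4) \<rho>_cont]) (auto intro: continuous_intros Wg_cont)
  then obtain e where e: "0 < e" "\<And>x. x \<in> closure \<Omega> \<Longrightarrow> -e < \<rho> x \<Longrightarrow> \<bar>W x \<bullet> g x\<bar> < \<delta> / C"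
    by auto
  show thesis
  proof (rule that[of "min e0 (e / 2)"])
    show "0 < min e0 (e / 2)" using C(2) e(1) by simp
    fix \<epsilon> :: real assume \<epsilon>: "0 < \<epsilon>" "\<epsilon> \<le> min e0 (e / 2)"
    let ?\<phi> = "cutoff \<rho> \<epsilon>" and ?k = "layer_weight \<rho> \<epsilon>"
    have k_cont: "continuous_on (closure \<Omega>) ?k"
      by (rule continuous_on_subset[OF continuous_on_layer_weight[OF \<rho>_cont] subset_UNIV])
    have kWg_int: "(\<lambda>x. ?k x * (W x \<bullet> g x)) integrable_on \<Omega>"
      by (intro int continuous_intros Wg_cont k_cont)
    have "((\<lambda>x. ?\<phi> x * (\<Sum>i\<in>Basis. D x i \<bullet> i) - ?k x * (g x \<bullet> V x)) has_integral 0) \<Omega>"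
      by (rule cutoff_divergence_integral[OF \<Omega>(1-3) \<rho> \<epsilon>(1) V])
    then have "((\<lambda>x. ?\<phi> x * f x - ?k x * (W x \<bullet> g x)) has_integral 0) \<Omega>"
      by (rule has_integral_eq[rotated]) (simp add: f(2) W(2) inner_commute)
    then have "integral \<Omega> (\<lambda>x. ?\<phi> x * f x) = integral \<Omega> (\<lambda>x. ?k x * (W x \<bullet> g x))"
      using integral_diff[OF int kWg_int, of "\<lambda>x. ?\<phi> x * f x"]
      by (simp add: integral_unique continuous_intros f(1) continuous_on_subset[OF continuous_on_cutoff[OF \<rho>_cont]])
    also have "norm \<dots> \<le> integral \<Omega> (\<lambda>x. \<delta> / C * ?k x)"
    proof (rule integral_norm_bound_integral[OF kWg_int integrable_on_mult_right[OF int[OF k_cont]]])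
      fix x assume x: "x \<in> \<Omega>"
      have "\<bar>W x \<bullet> g x\<bar> \<le> \<delta> / C" if "-2 * \<epsilon> < \<rho> x"
      proof -
        have "-e < \<rho> x" using that \<epsilon>(2) by linarith
        then show ?thesis using e(2)[of x] x closure_subset by (blast intro: less_imp_le)
      qed
      from layer_weight_mult_mono[OF \<epsilon>(1) this]
      show "norm (?k x * (W x \<bullet> g x)) \<le> \<delta> / C * ?k x"
        using layer_weight_nonneg[OF \<epsilon>(1), of \<rho> x] by (simp add: abs_mult mult.commute)
    qed
    also have "\<dots> = \<delta> / C * integral \<Omega> ?k" by (simp add: integral_mult_right)
    also have "\<dots> \<le> \<delta> / C * C" using mass[OF \<epsilon>(1)] \<epsilon>(2) \<delta> C(1) by (intro mult_left_mono) auto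
    finally show "\<bar>integral \<Omega> (\<lambda>x. ?\<phi> x * f x)\<bar> \<le> \<delta>" using C(1) by simp
  qed
qed

theorem divergence_integral_eq_zero_tangential:
  fixes \<Omega> :: "'a::euclidean_space set"
  assumes \<Omega>: "open \<Omega>" "bounded \<Omega>" "\<Omega> = {x. \<rho> x < 0}" "frontier \<Omega> = {x. \<rho> x = 0}"
    and \<rho>: "C1_with_grad \<rho> UNIV g" and g: "C1_with_deriv g UNIV H"
    and g_nz: "\<And>x. x \<in> frontier \<Omega> \<Longrightarrow> g x \<noteq> 0"
    and V: "C1_with_deriv V \<Omega> D"
    and W: "continuous_on (closure \<Omega>) W" "\<And>x. x \<in> \<Omega> \<Longrightarrow> W x = V x"
    and tangential: "\<And>x. x \<in> frontier \<Omega> \<Longrightarrow> W x \<bullet> g x = 0"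
    and f: "continuous_on (closure \<Omega>) f" "\<And>x. x \<in> \<Omega> \<Longrightarrow> f x = (\<Sum>i\<in>Basis. D x i \<bullet> i)"
  shows "(f has_integral 0) \<Omega>"
proof -
  have int: "h integrable_on \<Omega>" if "continuous_on (closure \<Omega>) h" for h :: "'a \<Rightarrow> real"
    by (rule integrable_on_if_continuous_on_closure[OF \<Omega>(1,2) that])
  define \<epsilon> where "\<epsilon> n = inverse (real (Suc n))" for n
  have \<epsilon>_pos: "0 < \<epsilon> n" for n by (simp add: \<epsilon>_def)
  have \<epsilon>_lim: "\<epsilon> \<longlonglongrightarrow> 0" unfolding \<epsilon>_def by (rule LIMSEQ_inverse_real_of_nat)
  have lim: "(\<lambda>n. integral \<Omega> (\<lambda>x. cutoff \<rho> (\<epsilon> n) x * f x)) \<longlonglongrightarrow> integral \<Omega> f"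
  proof (rule dominated_convergence(2))
    show "(\<lambda>x. cutoff \<rho> (\<epsilon> n) x * f x) integrable_on \<Omega>" for n
      by (rule int) (intro continuous_intros f(1) continuous_on_subset[OF continuous_on_cutoff[OF
          C1_with_grad_continuous_on[OF \<rho>]]] subset_UNIV)
    show "(\<lambda>x. \<bar>f x\<bar>) integrable_on \<Omega>" by (rule int) (intro continuous_intros f(1))
    show "norm (cutoff \<rho> (\<epsilon> n) x * f x) \<le> \<bar>f x\<bar>" for n x
      using cutoff_nonneg[of \<rho> "\<epsilon> n" x] cutoff_le_one[of \<rho> "\<epsilon> n" x]
      by (simp add: abs_mult mult_left_le_one_le)
    fix x assume "x \<in> \<Omega>"
    then have "\<rho> x < 0" using \<Omega>(3) by simp
    then have "\<forall>\<^sub>F n in sequentially. \<epsilon> n < - \<rho> x / 2" by (intro order_tendstoD(2)[OF \<epsilon>_lim]) simp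
    then have "\<forall>\<^sub>F n in sequentially. cutoff \<rho> (\<epsilon> n) x * f x = f x"
      by (rule eventually_mono) (simp add: cutoff_eq_1[OF \<epsilon>_pos])
    then show "(\<lambda>n. cutoff \<rho> (\<epsilon> n) x * f x) \<longlonglongrightarrow> f x" by (rule tendsto_eventually)
  qed
  have small: "\<forall>\<^sub>F n in sequentially. \<bar>integral \<Omega> (\<lambda>x. cutoff \<rho> (\<epsilon> n) x * f x)\<bar> \<le> \<delta>"
    if \<delta>: "0 < \<delta>" for \<delta>
  proof -
    obtain e where e: "0 < e" "\<And>\<epsilon>. 0 < \<epsilon> \<Longrightarrow> \<epsilon> \<le> e \<Longrightarrow> \<bar>integral \<Omega> (\<lambda>x. cutoff \<rho> \<epsilon> x * f x)\<bar> \<le> \<delta>"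
      using cutoff_integral_small[OF \<Omega> \<rho> g g_nz V W tangential f \<delta>] by blast
    have "\<forall>\<^sub>F n in sequentially. \<epsilon> n < e" by (rule order_tendstoD(2)[OF \<epsilon>_lim e(1)])
    then show ?thesis by (rule eventually_mono) (rule e(2)[OF \<epsilon>_pos less_imp_le])
  qed
  have abs_le: "\<bar>integral \<Omega> f\<bar> \<le> \<delta>" if "0 < \<delta>" for \<delta>
    by (rule tendsto_upperbound[OF tendsto_rabs[OF lim] small[OF that] trivial_limit_sequentially])
  have "\<bar>integral \<Omega> f\<bar> \<le> 0" by (rule field_le_epsilon) (simp add: abs_le)
  then have "integral \<Omega> f = 0" by simp
  then show ?thesis using integrable_integral[OF int[OF f(1)]] by simp
qed

section \<open>The logistic steady state\<close>

lemma C2beta_defining_funD: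
  assumes "C2beta_defining_fun \<Omega> \<beta> \<rho>"
  obtains g H where "C1_with_grad \<rho> UNIV g" "C1_with_deriv g UNIV H"
    "\<Omega> = {x. \<rho> x < 0}" "frontier \<Omega> = {x. \<rho> x = 0}" "\<And>x. x \<in> frontier \<Omega> \<Longrightarrow> g x \<noteq> 0"
    "\<And>x. outward_normal \<rho> x = g x /\<^sub>R norm (g x)"
proof -
  obtain g H where gH: "C2_with \<rho> UNIV g H" and \<Omega>: "\<Omega> = {x. \<rho> x < 0}" "frontier \<Omega> = {x. \<rho> x = 0}"
    and nz: "\<forall>x\<in>frontier \<Omega>. grad \<rho> x \<noteq> 0"
    using assms unfolding C2beta_defining_fun_def by blast
  have "grad \<rho> x = g x" for x
    using C2_withD(1)[OF gH] unfolding C1_with_grad_def by (auto intro: grad_eqI)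
  with C2_withD[OF gH] \<Omega> nz show thesis by (intro that) (auto simp: outward_normal_def)
qed

lemma steady_state_ne_somewhere:
  fixes a u P K r :: "'a::euclidean_space \<Rightarrow> real"
  assumes \<Omega>: "open \<Omega>"
    and u_eq: "\<And>x. x \<in> \<Omega> \<Longrightarrow>
        divg (\<lambda>y. a y *\<^sub>R grad (\<lambda>z. u z / P z) y) x + r x * u x * (1 - u x / K x) = 0"
    and K_div: "x1 \<in> \<Omega>" "divg (\<lambda>y. a y *\<^sub>R grad (\<lambda>z. K z / P z) y) x1 \<noteq> 0"
  obtains x where "x \<in> \<Omega>" "u x \<noteq> K x"
proof (rule ccontr)
  assume "\<not> thesis"
  with that have uK: "u x = K x" if "x \<in> \<Omega>" for x using that by blast
  have "divg (\<lambda>y. a y *\<^sub>R grad (\<lambda>z. K z / P z) y) x1 = divg (\<lambda>y. a y *\<^sub>R grad (\<lambda>z. u z / P z) y) x1"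
    by (intro divg_cong_open[OF \<Omega> K_div(1)] arg_cong[where f="\<lambda>v. a _ *\<^sub>R v"] grad_cong_open[OF \<Omega>])
       (simp_all add: uK)
  also have "\<dots> = 0"
    using u_eq[OF K_div(1)] uK[OF K_div(1)] by (cases "K x1 = 0") simp_all
  finally show False using K_div(2) by simp
qed

lemma integral_gap_logistic:
  fixes r u K :: "'a::euclidean_space \<Rightarrow> real"
  assumes \<Omega>: "open \<Omega>" "bounded \<Omega>"
    and cont: "continuous_on (closure \<Omega>) r" "continuous_on (closure \<Omega>) u" "continuous_on (closure \<Omega>) K"
    and pos: "\<And>x. x \<in> closure \<Omega> \<Longrightarrow> 0 < r x" "\<And>x. x \<in> closure \<Omega> \<Longrightarrow> 0 < K x"
    and balance: "((\<lambda>x. r x * u x * (1 - u x / K x)) has_integral 0) \<Omega>"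
    and x0: "x0 \<in> \<Omega>" "u x0 \<noteq> K x0"
  shows "integral \<Omega> (\<lambda>x. r x * u x) < integral \<Omega> (\<lambda>x. r x * K x)"
proof -
  have K_nz: "K x \<noteq> 0" if "x \<in> closure \<Omega>" for x using pos(2)[OF that] by simp
  have int: "h integrable_on \<Omega>" if "continuous_on (closure \<Omega>) h" for h :: "'a \<Rightarrow> real"
    by (rule integrable_on_if_continuous_on_closure[OF \<Omega> that])
  define q where "q x = r x * (K x - u x)^2 / K x" for x
  have q_cont: "continuous_on (closure \<Omega>) q"
    unfolding q_def[abs_def] by (intro continuous_intros cont) (use K_nz in auto)
  have "r x * K x - r x * u x = q x + r x * u x * (1 - u x / K x)" if "x \<in> \<Omega>" for x
  proof -
    have "K x \<noteq> 0" using K_nz that closure_subset by blast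
    then show ?thesis by (simp add: q_def field_simps power2_eq_square)
  qed
  then have "integral \<Omega> (\<lambda>x. r x * K x - r x * u x) = integral \<Omega> (\<lambda>x. q x + r x * u x * (1 - u x / K x))"
    by (rule integral_cong)
  also have "\<dots> = integral \<Omega> q"
    using integral_add[OF int[OF q_cont] has_integral_integrable[OF balance]] integral_unique[OF balance]
    by simp
  finally have "integral \<Omega> (\<lambda>x. r x * K x) - integral \<Omega> (\<lambda>x. r x * u x) = integral \<Omega> q"
    using integral_diff[OF int int] cont by (simp add: continuous_intros)
  moreover have "0 < integral \<Omega> q"
  proof (rule integral_pos_if_pos_at[OF \<Omega>(1) _ int[OF q_cont] _ x0(1)])
    show "continuous_on \<Omega> q" using q_cont closure_subset by (rule continuous_on_subset)
    show "0 \<le> q x" if "x \<in> \<Omega>" for x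
    proof -
      have "0 < r x" "0 < K x" using pos[of x] that closure_subset by blast+
      then show ?thesis by (simp add: q_def)
    qed
    have "0 < r x0" "0 < K x0" using pos[of x0] x0(1) closure_subset by blast+
    then show "0 < q x0" using x0(2) by (simp add: q_def)
  qed
  ultimately show ?thesis by simp
qed

lemma neumann_flux_integral_zero:
  fixes a u P f :: "'a::euclidean_space \<Rightarrow> real"
  assumes \<Omega>: "open \<Omega>" "bounded \<Omega>" and bdry: "C2beta_defining_fun \<Omega> \<beta> \<rho>"
    and a: "C2_on a \<Omega>" "continuous_on (closure \<Omega>) a" and u: "C2_on u \<Omega>" and P: "C2_on P \<Omega>"
    and P_nz: "\<And>x. x \<in> \<Omega> \<Longrightarrow> P x \<noteq> 0"
    and G: "continuous_on (closure \<Omega>) G" "\<And>x. x \<in> \<Omega> \<Longrightarrow> G x = grad (\<lambda>z. u z / P z) x"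
      "\<And>x. x \<in> frontier \<Omega> \<Longrightarrow> G x \<bullet> outward_normal \<rho> x = 0"
    and f: "continuous_on (closure \<Omega>) f"
      "\<And>x. x \<in> \<Omega> \<Longrightarrow> f x = divg (\<lambda>y. a y *\<^sub>R grad (\<lambda>z. u z / P z) y) x"
  shows "(f has_integral 0) \<Omega>"
proof -
  obtain g H where \<rho>: "C1_with_grad \<rho> UNIV g" "C1_with_deriv g UNIV H"
    "\<Omega> = {x. \<rho> x < 0}" "frontier \<Omega> = {x. \<rho> x = 0}" "\<And>x. x \<in> frontier \<Omega> \<Longrightarrow> g x \<noteq> 0"
    and normal: "\<And>x. outward_normal \<rho> x = g x /\<^sub>R norm (g x)"
    using C2beta_defining_funD[OF bdry] by blast
  obtain ga Ha where "C2_with a \<Omega> ga Ha" using a(1) unfolding C2_on_def by blast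
  then obtain D where flux: "C1_with_deriv (\<lambda>x. a x *\<^sub>R grad (\<lambda>z. u z / P z) x) \<Omega> D"
    and div: "\<And>x. x \<in> \<Omega> \<Longrightarrow> divg (\<lambda>y. a y *\<^sub>R grad (\<lambda>z. u z / P z) y) x = (\<Sum>i\<in>Basis. D x i \<bullet> i)"
    using weighted_flux_C1[OF \<Omega>(1) C2_withD(1) u P P_nz] by blast
  show ?thesis
  proof (rule divergence_integral_eq_zero_tangential[OF \<Omega> \<rho>(3,4,1,2,5) flux])
    show "continuous_on (closure \<Omega>) (\<lambda>x. a x *\<^sub>R G x)" by (intro continuous_intros a(2) G(1))
    show "a x *\<^sub>R G x = a x *\<^sub>R grad (\<lambda>z. u z / P z) x" if "x \<in> \<Omega>" for x using G(2)[OF that] by simp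
    show "(a x *\<^sub>R G x) \<bullet> g x = 0" if "x \<in> frontier \<Omega>" for x
      using G(3)[OF that] \<rho>(5)[OF that] by (simp add: normal)
  qed (use f div in simp_all)
qed

theorem lemma3:
  fixes \<Omega> :: "'a::euclidean_space set"
    and \<beta> :: real
    and \<rho> r a1 P K u :: "'a \<Rightarrow> real"
  assumes dom: "open \<Omega>" "bounded \<Omega>" "connected \<Omega>" "\<Omega> \<noteq> {}"
    and bdry: "0 < \<beta>" "C2beta_defining_fun \<Omega> \<beta> \<rho>"
    and cont: "continuous_on (closure \<Omega>) r" "continuous_on (closure \<Omega>) a1"
              "continuous_on (closure \<Omega>) P" "continuous_on (closure \<Omega>) K"
    and pos: "\<And>x. x \<in> closure \<Omega> \<Longrightarrow> r x > 0" "\<And>x. x \<in> closure \<Omega> \<Longrightarrow> a1 x > 0"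
             "\<And>x. x \<in> closure \<Omega> \<Longrightarrow> P x > 0" "\<And>x. x \<in> closure \<Omega> \<Longrightarrow> K x > 0"
    and reg: "C2_on a1 \<Omega>" "C2_on P \<Omega>" "C2_on K \<Omega>"
    and u_reg: "C2_on u \<Omega>" "continuous_on (closure \<Omega>) u"
    and u_pos: "\<And>x. x \<in> \<Omega> \<Longrightarrow> u x > 0"
    and u_eq: "\<And>x. x \<in> \<Omega> \<Longrightarrow>
        divg (\<lambda>y. a1 y *\<^sub>R grad (\<lambda>z. u z / P z) y) x + r x * u x * (1 - u x / K x) = 0"
    and u_neumann: "\<exists>G. continuous_on (closure \<Omega>) G \<and>
        (\<forall>x\<in>\<Omega>. G x = grad (\<lambda>z. u z / P z) x) \<and>
        (\<forall>x\<in>frontier \<Omega>. G x \<bullet> outward_normal \<rho> x = 0)"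
    and nontriv: "\<exists>x\<in>\<Omega>. divg (\<lambda>y. a1 y *\<^sub>R grad (\<lambda>z. K z / P z) y) x \<noteq> 0"
  shows "integral \<Omega> (\<lambda>x. r x * K x) > integral \<Omega> (\<lambda>x. r x * u x)"
proof -
  obtain G where G: "continuous_on (closure \<Omega>) G" "\<And>x. x \<in> \<Omega> \<Longrightarrow> G x = grad (\<lambda>z. u z / P z) x"
    "\<And>x. x \<in> frontier \<Omega> \<Longrightarrow> G x \<bullet> outward_normal \<rho> x = 0"
    using u_neumann by blast
  have P_nz: "P x \<noteq> 0" if "x \<in> \<Omega>" for x using pos(3) that closure_subset by force
  have "((\<lambda>x. - (r x * u x * (1 - u x / K x))) has_integral 0) \<Omega>"
  proof (rule neumann_flux_integral_zero[OF dom(1,2) bdry(2) reg(1) cont(2) u_reg(1) reg(2) P_nz G])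
    show "continuous_on (closure \<Omega>) (\<lambda>x. - (r x * u x * (1 - u x / K x)))"
      using pos(4) by (intro continuous_intros cont u_reg(2)) force
    show "- (r x * u x * (1 - u x / K x)) = divg (\<lambda>y. a1 y *\<^sub>R grad (\<lambda>z. u z / P z) y) x"
      if "x \<in> \<Omega>" for x
      using u_eq[OF that] by simp
  qed
  moreover obtain x0 where "x0 \<in> \<Omega>" "u x0 \<noteq> K x0"
    using nontriv steady_state_ne_somewhere[OF dom(1) u_eq] by blast
  ultimately show ?thesis
    using integral_gap_logistic[OF dom(1,2) cont(1) u_reg(2) cont(4) pos(1,4)]
    by (simp add: has_integral_neg_iff)
qed

end
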